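(* Fix $n,L\ge1$, $a_0\in\mathbb{R}^L_{++}$ with $\sum_\ell a_{0,\ell}=1$, and vectors $\hat b_\ell=(\hat b_{\ell,0},\dots,\hat b_{\ell,L})\ge0$ ($\ell=1,\dots,L$) with $\hat b_{\ell,0}>0$ and $\sum_{\ell'=0}^L\hat b_{\ell,\ell'}=1$. There exists $\bar\varepsilon>0$ such that, whenever the requirements are $b_\ell=(1-\varepsilon_\ell)\hat b_\ell$ with $\varepsilon_\ell\in(0,\bar\varepsilon)$ for all $\ell$, every $\mathcal{Q}$-clustered structure $a^{\mathcal{Q}}$ (for every partition $\mathcal{Q}$ of $\{1,\dots,n\}$) is a Nash equilibrium of the $n$-fold replicate game $\mathcal{G}^n(a_0,b)$.
   Context: Base game: sectors $0$ (labor) and $1,\dots,L$; household consumption shares $a_0\in\mathbb{R}^L_{++}$, $\sum a_{0,\ell}=1$; sector-$\ell$ requirements $b_\ell=(b_{\ell,0},\dots,b_{\ell,L})\ge0$, $b_{\ell,0}>0$, $\sum_{\ell'}b_{\ell,\ell'}\le1$. The $n$-fold replicate $\mathcal{G}^n(a_0,b)$: firms $M=\{1,\dots,nL\}$, $M_\ell=\{(\ell-1)n+1,\dots,\ell n\}$ (firm $(\ell-1)n+c$ is the sector-$\ell$ firm of country $c\in\{1,\dots,n\}$); household share $a_{0,i}=a_{0,\ell}/n$ for $i\in M_\ell$; every $i\in M_\ell$ has requirement vector $b_\ell$ and $\varepsilon_i=1-\sum_{\ell'}b_{\ell,\ell'}$. Firm $i$ chooses $a_i\in S_i=\{a_i\in\mathbb{R}^{M\cup\{0\}}_+: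 a_{i,0}=b_{\ell,0},\ \sum_{j\in M_{\ell'}}a_{i,j}=b_{\ell,\ell'}\ \forall\ell'\ge1\}$ and receives payoff $\pi_i(a)=\varepsilon_i\bar v_i$, where $\bar v$ solves $\bar v_j=a_{0,j}+a_{0,j}\sum_k\varepsilon_k\bar v_k+\sum_ka_{k,j}\bar v_k$ ($j\in M$), $\sum_ka_{k,0}\bar v_k=1$. For a partition $\mathcal{Q}=\{Q_1,\dots,Q_K\}$ of $\{1,\dots,n\}$ let $Q_{\ell,k}=\{(\ell-1)n+c:c\in Q_k\}$. The $\mathcal{Q}$-clustered structure $a^{\mathcal{Q}}$: for $i\in Q_{\ell,k}$, $a_{i,0}=b_{\ell,0}$, $a_{i,i}=b_{\ell,\ell}$, $a_{i,j}=0$ for $j\in Q_{\ell,k}\setminus\{i\}$, $a_{i,j}=b_{\ell,\ell'}/|Q_k|$ for $j\in Q_{\ell',k}$ with $\ell'\notin\{0,\ell\}$, and $a_{i,j}=0$ otherwise. *)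

theory Defs
  imports Complex_Main "HOL-Library.Disjoint_Sets"
begin

text \<open>Sectors are 1..L (0 = labor).
  Firms are the naturals 1..n*L; firm (l-1)*n+c is the sector-l firm of country c.
  a0 l is the household share of sector l; b l l' is the requirement of sector l
  for input l' (l' = 0 is labor). A strategy profile is a :: nat => nat => real,
  with a i j the share firm i buys from j (j = 0 labor).\<close>

definition firms :: "nat \<Rightarrow> nat \<Rightarrow> nat set" where
  "firms n L = {1..n*L}"

definition sector :: "nat \<Rightarrow> nat \<Rightarrow> nat" where
  "sector n i = (i - 1) div n + 1"

definition country :: "nat \<Rightarrow> nat \<Rightarrow> nat" where
  "country n i = (i - 1) mod n + 1"

definition sector_firms :: "nat \<Rightarrow> nat \<Rightarrow> nat set" where
  "sector_firms n l = {(l - 1) * n + 1 .. l * n}"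

definition hh_share :: "nat \<Rightarrow> (nat \<Rightarrow> real) \<Rightarrow> nat \<Rightarrow> real" where
  "hh_share n a0 j = a0 (sector n j) / real n"

definition firm_eps :: "nat \<Rightarrow> nat \<Rightarrow> (nat \<Rightarrow> nat \<Rightarrow> real) \<Rightarrow> nat \<Rightarrow> real" where
  "firm_eps n L b i = 1 - (\<Sum>l'=0..L. b (sector n i) l')"

definition strat_set :: "nat \<Rightarrow> nat \<Rightarrow> (nat \<Rightarrow> nat \<Rightarrow> real) \<Rightarrow> nat \<Rightarrow> (nat \<Rightarrow> real) set" where
  "strat_set n L b i = {x. (\<forall>j. 0 \<le> x j) \<and> (\<forall>j. j \<notin> insert 0 (firms n L) \<longrightarrow> x j = 0)
      \<and> x 0 = b (sector n i) 0
      \<and> (\<forall>l'\<in>{1..L}. (\<Sum>j\<in>sector_firms n l'. x j) = b (sector n i) l')}"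

definition value_eqs :: "nat \<Rightarrow> nat \<Rightarrow> (nat \<Rightarrow> real) \<Rightarrow> (nat \<Rightarrow> nat \<Rightarrow> real)
    \<Rightarrow> (nat \<Rightarrow> nat \<Rightarrow> real) \<Rightarrow> (nat \<Rightarrow> real) \<Rightarrow> bool" where
  "value_eqs n L a0 b a v \<longleftrightarrow>
     (\<forall>j\<in>firms n L. v j = hh_share n a0 j
         + hh_share n a0 j * (\<Sum>k\<in>firms n L. firm_eps n L b k * v k)
         + (\<Sum>k\<in>firms n L. a k j * v k))
     \<and> (\<Sum>k\<in>firms n L. a k 0 * v k) = 1"

definition vbar :: "nat \<Rightarrow> nat \<Rightarrow> (nat \<Rightarrow> real) \<Rightarrow> (nat \<Rightarrow> nat \<Rightarrow> real)
    \<Rightarrow> (nat \<Rightarrow> nat \<Rightarrow> real) \<Rightarrow> nat \<Rightarrow> real" where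
  "vbar n L a0 b a = (THE v. value_eqs n L a0 b a v \<and> (\<forall>j. j \<notin> firms n L \<longrightarrow> v j = 0))"

definition payoff :: "nat \<Rightarrow> nat \<Rightarrow> (nat \<Rightarrow> real) \<Rightarrow> (nat \<Rightarrow> nat \<Rightarrow> real)
    \<Rightarrow> nat \<Rightarrow> (nat \<Rightarrow> nat \<Rightarrow> real) \<Rightarrow> real" where
  "payoff n L a0 b i a = firm_eps n L b i * vbar n L a0 b a i"

definition nash_eq :: "nat \<Rightarrow> nat \<Rightarrow> (nat \<Rightarrow> real) \<Rightarrow> (nat \<Rightarrow> nat \<Rightarrow> real)
    \<Rightarrow> (nat \<Rightarrow> nat \<Rightarrow> real) \<Rightarrow> bool" where
  "nash_eq n L a0 b a \<longleftrightarrow>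
     (\<forall>i\<in>firms n L. a i \<in> strat_set n L b i) \<and>
     (\<forall>i\<in>firms n L. \<forall>x\<in>strat_set n L b i.
         payoff n L a0 b i (a(i := x)) \<le> payoff n L a0 b i a)"

definition cluster_of :: "nat set set \<Rightarrow> nat \<Rightarrow> nat set" where
  "cluster_of Q c = (THE S. S \<in> Q \<and> c \<in> S)"

definition clustered :: "nat \<Rightarrow> nat \<Rightarrow> (nat \<Rightarrow> nat \<Rightarrow> real) \<Rightarrow> nat set set
    \<Rightarrow> nat \<Rightarrow> nat \<Rightarrow> real" where
  "clustered n L b Q i j =
     (if i \<notin> firms n L then 0
      else if j = 0 then b (sector n i) 0
      else if j = i then b (sector n i) (sector n i)
      else if j \<in> firms n L \<and> sector n j \<noteq> sector n i
              \<and> country n j \<in> cluster_of Q (country n i)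
        then b (sector n i) (sector n j) / real (card (cluster_of Q (country n i)))
      else 0)"

end

theory Submission
  imports Defs
begin

text \<open>Values solve \<open>v = h (1 + e \<cdot> v) + a\<^sup>T v\<close> with labor as numeraire, so \<open>v = u / (\<Sum>k. a k 0 u k)\<close>
  where \<open>u = h + a\<^sup>T u\<close> is gross output. If firm \<open>i\<close> replaces its row \<open>a i\<close> by \<open>x\<close>, then
  \<open>f \<cdot> (u' - u) = u' i \<cdot> (p \<cdot> (x - a i))\<close> for every \<open>f\<close>, where \<open>p = f + a p\<close>.
  For \<open>f\<close> the labor shares, \<open>p\<close> is the labor content of a firm, which depends only on its
  sector; all strategies buy the same amount from each sector, so the numeraire does not move.
  For \<open>f\<close> the indicator of \<open>i\<close>, \<open>p\<close> is the downstream weight of \<open>i\<close>. Under the clustered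
  structure it vanishes outside the cluster of \<open>i\<close> and, inside it, is constant on each sector
  except that \<open>i\<close> weighs at least as much as its own sector; so within every sector the
  suppliers of \<open>i\<close> have maximal weight and no deviation raises \<open>u i\<close>, hence the payoff of \<open>i\<close>.
  Nothing beyond \<open>0 < eps l < 1\<close> is used, so \<open>ebar = 1\<close> works.\<close>

section \<open>Nonnegative solutions of substochastic linear systems\<close>

primrec neumann_iter :: "'a set \<Rightarrow> ('a \<Rightarrow> real) \<Rightarrow> ('a \<Rightarrow> 'a \<Rightarrow> real) \<Rightarrow> nat \<Rightarrow> 'a \<Rightarrow> real" where
  "neumann_iter S f M 0 = (\<lambda>j. 0)"
| "neumann_iter S f M (Suc m) = (\<lambda>j. f j + (\<Sum>k\<in>S. M j k * neumann_iter S f M m k))"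

lemma neumann_iter_nonneg_mono:
  fixes M :: "'a \<Rightarrow> 'a \<Rightarrow> real"
  assumes "\<forall>j\<in>S. 0 \<le> f j" and "\<forall>j\<in>S. \<forall>k\<in>S. 0 \<le> M j k" and "j \<in> S"
  shows "0 \<le> neumann_iter S f M m j" and "neumann_iter S f M m j \<le> neumann_iter S f M (Suc m) j"
proof -
  have "\<forall>j\<in>S. 0 \<le> neumann_iter S f M m j \<and> neumann_iter S f M m j \<le> neumann_iter S f M (Suc m) j"
  proof (induction m)
    case 0
    then show ?case using assms by (simp add: sum_nonneg)
  next
    case (Suc m)
    show ?case
    proof
      fix j assume j: "j \<in> S"
      have "(\<Sum>k\<in>S. M j k * neumann_iter S f M m k) \<le> (\<Sum>k\<in>S. M j k * neumann_iter S f M (Suc m) k)"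
        using Suc j assms by (intro sum_mono mult_left_mono) auto
      moreover have "0 \<le> neumann_iter S f M (Suc m) j"
        using Suc j assms by (auto intro!: add_nonneg_nonneg sum_nonneg mult_nonneg_nonneg)
      ultimately show "0 \<le> neumann_iter S f M (Suc m) j
          \<and> neumann_iter S f M (Suc m) j \<le> neumann_iter S f M (Suc (Suc m)) j"
        by (simp only: neumann_iter.simps) simp
    qed
  qed
  with assms(3) show "0 \<le> neumann_iter S f M m j" "neumann_iter S f M m j \<le> neumann_iter S f M (Suc m) j"
    by auto
qed

lemma nonneg_fixpoint_if_neumann_bounded:
  fixes M :: "'a \<Rightarrow> 'a \<Rightarrow> real"
  assumes f: "\<forall>j\<in>S. 0 \<le> f j" and M: "\<forall>j\<in>S. \<forall>k\<in>S. 0 \<le> M j k"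
    and bounded: "\<forall>m. \<forall>j\<in>S. neumann_iter S f M m j \<le> B"
  shows "\<exists>y. (\<forall>j\<in>S. y j = f j + (\<Sum>k\<in>S. M j k * y k)) \<and> (\<forall>j\<in>S. 0 \<le> y j)"
proof -
  define y where "y j = lim (\<lambda>m. neumann_iter S f M m j)" for j
  have lim: "(\<lambda>m. neumann_iter S f M m j) \<longlonglongrightarrow> y j" if j: "j \<in> S" for j
  proof -
    have "incseq (\<lambda>m. neumann_iter S f M m j)"
      using neumann_iter_nonneg_mono(2)[OF f M j] by (rule incseq_SucI)
    with bounded j obtain l where "(\<lambda>m. neumann_iter S f M m j) \<longlonglongrightarrow> l"
      using incseq_convergent by blast
    then show ?thesis unfolding y_def by (simp add: limI)
  qed
  have "y j = f j + (\<Sum>k\<in>S. M j k * y k)" if j: "j \<in> S" for j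
  proof -
    have "(\<lambda>m. neumann_iter S f M (Suc m) j) \<longlonglongrightarrow> y j"
      using lim[OF j] by (rule LIMSEQ_Suc)
    moreover have "(\<lambda>m. neumann_iter S f M (Suc m) j) \<longlonglongrightarrow> f j + (\<Sum>k\<in>S. M j k * y k)"
      unfolding neumann_iter.simps using lim by (intro tendsto_intros) auto
    ultimately show ?thesis by (rule LIMSEQ_unique)
  qed
  moreover have "0 \<le> y j" if j: "j \<in> S" for j
    using LIMSEQ_le_const[OF lim[OF j], of 0] neumann_iter_nonneg_mono(1)[OF f M j] by blast
  ultimately show ?thesis by blast
qed

lemma strict_bound_finite:
  fixes g :: "'a \<Rightarrow> real"
  assumes "finite A" and "\<forall>x\<in>A. g x < 1"
  obtains \<theta> where "0 \<le> \<theta>" "\<theta> < 1" "\<forall>x\<in>A. g x \<le> \<theta>"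
proof
  let ?\<theta> = "Max (insert 0 (g ` A))"
  show "0 \<le> ?\<theta>" "\<forall>x\<in>A. g x \<le> ?\<theta>" using assms(1) by auto
  show "?\<theta> < 1" using assms by (subst Max_less_iff) auto
qed

lemma nonneg_fixpoint_if_row_sums_less_one:
  fixes M :: "'a \<Rightarrow> 'a \<Rightarrow> real"
  assumes fin: "finite S" and f: "\<forall>j\<in>S. 0 \<le> f j" and M: "\<forall>j\<in>S. \<forall>k\<in>S. 0 \<le> M j k"
    and rows: "\<forall>j\<in>S. (\<Sum>k\<in>S. M j k) < 1"
  shows "\<exists>y. (\<forall>j\<in>S. y j = f j + (\<Sum>k\<in>S. M j k * y k)) \<and> (\<forall>j\<in>S. 0 \<le> y j)"
proof -
  obtain \<theta> where \<theta>: "\<theta> < 1" "\<forall>j\<in>S. (\<Sum>k\<in>S. M j k) \<le> \<theta>"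
    using strict_bound_finite[of S "\<lambda>j. \<Sum>k\<in>S. M j k"] fin rows by blast
  define B where "B = sum f S / (1 - \<theta>)"
  have B: "0 \<le> B" "sum f S + \<theta> * B = B"
    using \<theta>(1) f by (auto simp: B_def field_simps intro: sum_nonneg divide_nonneg_pos)
  have "\<forall>j\<in>S. neumann_iter S f M m j \<le> B" for m
  proof (induction m)
    case 0
    then show ?case using B by simp
  next
    case (Suc m)
    show ?case
    proof
      fix j assume j: "j \<in> S"
      have "(\<Sum>k\<in>S. M j k * neumann_iter S f M m k) \<le> (\<Sum>k\<in>S. M j k * B)"
        using Suc j M by (intro sum_mono mult_left_mono) auto
      also have "\<dots> \<le> \<theta> * B"
        using \<theta>(2) j B(1) by (simp add: sum_distrib_right[symmetric] mult_right_mono)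
      finally show "neumann_iter S f M (Suc m) j \<le> B"
        using member_le_sum[of j S f] fin f j B(2) by simp
    qed
  qed
  then show ?thesis using nonneg_fixpoint_if_neumann_bounded[OF f M] by blast
qed

lemma nonneg_fixpoint_if_col_sums_less_one:
  fixes M :: "'a \<Rightarrow> 'a \<Rightarrow> real"
  assumes fin: "finite S" and f: "\<forall>j\<in>S. 0 \<le> f j" and M: "\<forall>j\<in>S. \<forall>k\<in>S. 0 \<le> M j k"
    and cols: "\<forall>k\<in>S. (\<Sum>j\<in>S. M j k) < 1"
  shows "\<exists>y. (\<forall>j\<in>S. y j = f j + (\<Sum>k\<in>S. M j k * y k)) \<and> (\<forall>j\<in>S. 0 \<le> y j)"
proof -
  obtain \<theta> where \<theta>: "0 \<le> \<theta>" "\<theta> < 1" "\<forall>k\<in>S. (\<Sum>j\<in>S. M j k) \<le> \<theta>"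
    using strict_bound_finite[of S "\<lambda>k. \<Sum>j\<in>S. M j k"] fin cols by blast
  define B where "B = sum f S / (1 - \<theta>)"
  have B: "0 \<le> B" "sum f S + \<theta> * B = B"
    using \<theta>(2) f by (auto simp: B_def field_simps intro: sum_nonneg divide_nonneg_pos)
  note nonneg = neumann_iter_nonneg_mono(1)[OF f M]
  have total: "(\<Sum>j\<in>S. neumann_iter S f M m j) \<le> B" for m
  proof (induction m)
    case 0
    then show ?case using B by simp
  next
    case (Suc m)
    have "(\<Sum>j\<in>S. \<Sum>k\<in>S. M j k * neumann_iter S f M m k)
        = (\<Sum>k\<in>S. (\<Sum>j\<in>S. M j k) * neumann_iter S f M m k)"
      by (subst sum.swap) (simp add: sum_distrib_right)
    also have "\<dots> \<le> (\<Sum>k\<in>S. \<theta> * neumann_iter S f M m k)"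
      using \<theta>(3) nonneg by (intro sum_mono mult_right_mono) auto
    also have "\<dots> \<le> \<theta> * B" using Suc \<theta>(1) by (simp add: sum_distrib_left[symmetric] mult_left_mono)
    finally show ?case using B(2) by (simp add: sum.distrib)
  qed
  have "neumann_iter S f M m j \<le> B" if "j \<in> S" for m j
    using member_le_sum[of j S "neumann_iter S f M m"] fin nonneg that total[of m] by fastforce
  then show ?thesis using nonneg_fixpoint_if_neumann_bounded[OF f M] by blast
qed

text \<open>A set of rows that only draws on itself and leaks strictly carries no nonnegative
  solution of the homogeneous equation: compare the maximum with its own average.\<close>

lemma nonneg_fixpoint_vanishes_on_closed_set:
  fixes M :: "'a \<Rightarrow> 'a \<Rightarrow> real"
  assumes fin: "finite T" and TS: "T \<subseteq> S"
    and M: "\<forall>j\<in>T. \<forall>k\<in>S. 0 \<le> M j k" and closed: "\<forall>j\<in>T. \<forall>k\<in>S - T. M j k = 0"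
    and rows: "\<forall>j\<in>T. (\<Sum>k\<in>S. M j k) < 1"
    and p: "\<forall>k\<in>S. 0 \<le> p k" and hom: "\<forall>j\<in>T. p j = (\<Sum>k\<in>S. M j k * p k)"
    and j: "j \<in> T"
  shows "p j = 0"
proof -
  define m where "m = Max (p ` T)"
  have le_m: "p k \<le> m" if "k \<in> T" for k unfolding m_def using fin that by simp
  have "m \<in> p ` T" unfolding m_def using fin j by (intro Max_in) auto
  then obtain j0 where j0: "j0 \<in> T" "p j0 = m" by auto
  have m0: "0 \<le> m" using j0 p TS by auto
  have "m = (\<Sum>k\<in>S. M j0 k * p k)" using hom j0 by simp
  also have "\<dots> \<le> (\<Sum>k\<in>S. M j0 k * m)"
  proof (intro sum_mono)
    fix k assume k: "k \<in> S"
    show "M j0 k * p k \<le> M j0 k * m"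
      using M closed j0(1) le_m k by (cases "k \<in> T") (auto intro: mult_left_mono)
  qed
  also have "\<dots> = (\<Sum>k\<in>S. M j0 k) * m" by (simp add: sum_distrib_right)
  finally have "(1 - (\<Sum>k\<in>S. M j0 k)) * m \<le> 0" by (simp add: algebra_simps)
  moreover have "(\<Sum>k\<in>S. M j0 k) < 1" using rows j0(1) by blast
  ultimately have "m \<le> 0" by (simp add: mult_le_0_iff)
  then show ?thesis using le_m[OF j] p j TS by force
qed

lemma sum_adjoint_fixpoints:
  fixes a :: "'a \<Rightarrow> 'a \<Rightarrow> real"
  assumes d: "\<forall>j\<in>S. d j = (\<Sum>k\<in>S. a k j * d k) + g j"
    and p: "\<forall>j\<in>S. p j = f j + (\<Sum>k\<in>S. a j k * p k)"
  shows "(\<Sum>j\<in>S. f j * d j) = (\<Sum>j\<in>S. p j * g j)"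
proof -
  define X where "X = (\<Sum>j\<in>S. \<Sum>k\<in>S. a j k * p k * d j)"
  have "(\<Sum>j\<in>S. p j * d j) = (\<Sum>j\<in>S. (f j + (\<Sum>k\<in>S. a j k * p k)) * d j)"
    using p by (intro sum.cong) auto
  also have "\<dots> = (\<Sum>j\<in>S. f j * d j) + X"
    unfolding X_def by (simp only: distrib_right sum.distrib sum_distrib_right)
  finally have "(\<Sum>j\<in>S. p j * d j) = (\<Sum>j\<in>S. f j * d j) + X" .
  moreover have "(\<Sum>j\<in>S. p j * d j) = (\<Sum>j\<in>S. p j * ((\<Sum>k\<in>S. a k j * d k) + g j))"
    using d by (intro sum.cong) auto
  moreover have "\<dots> = (\<Sum>j\<in>S. \<Sum>k\<in>S. p j * (a k j * d k)) + (\<Sum>j\<in>S. p j * g j)"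
    by (simp add: distrib_left sum.distrib sum_distrib_left)
  moreover have "(\<Sum>j\<in>S. \<Sum>k\<in>S. p j * (a k j * d k)) = X"
    unfolding X_def by (subst sum.swap) (simp add: ac_simps)
  ultimately show ?thesis by linarith
qed

section \<open>Input-output economies\<close>

text \<open>An input-output economy on the firms \<open>S\<close>: \<open>a k j\<close> is the share of firm \<open>k\<close>'s revenue
  spent on firm \<open>j\<close>, \<open>a k 0\<close> the share spent on labor, \<open>e k\<close> the profit share, and \<open>h\<close> the household
  budget shares.\<close>

definition io_economy :: "nat set \<Rightarrow> (nat \<Rightarrow> real) \<Rightarrow> (nat \<Rightarrow> real) \<Rightarrow> (nat \<Rightarrow> nat \<Rightarrow> real) \<Rightarrow> bool"
  where "io_economy S h e a \<longleftrightarrow> finite S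
    \<and> (\<forall>k\<in>S. \<forall>j\<in>S. 0 \<le> a k j) \<and> (\<forall>k\<in>S. 0 < a k 0) \<and> (\<forall>k\<in>S. 0 \<le> e k)
    \<and> (\<forall>k\<in>S. (\<Sum>j\<in>S. a k j) + a k 0 + e k = 1)
    \<and> (\<forall>j\<in>S. 0 \<le> h j) \<and> (\<Sum>j\<in>S. h j) = 1"

definition value_system :: "nat set \<Rightarrow> (nat \<Rightarrow> real) \<Rightarrow> (nat \<Rightarrow> real) \<Rightarrow> (nat \<Rightarrow> nat \<Rightarrow> real)
    \<Rightarrow> (nat \<Rightarrow> real) \<Rightarrow> bool"
  where "value_system S h e a v \<longleftrightarrow>
    (\<forall>j\<in>S. v j = h j + h j * (\<Sum>k\<in>S. e k * v k) + (\<Sum>k\<in>S. a k j * v k))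
    \<and> (\<Sum>k\<in>S. a k 0 * v k) = 1"

definition gross_output :: "nat set \<Rightarrow> (nat \<Rightarrow> real) \<Rightarrow> (nat \<Rightarrow> nat \<Rightarrow> real) \<Rightarrow> (nat \<Rightarrow> real) \<Rightarrow> bool"
  where "gross_output S h a u \<longleftrightarrow>
    (\<forall>j\<in>S. u j = h j + (\<Sum>k\<in>S. a k j * u k)) \<and> (\<forall>j\<in>S. 0 \<le> u j)"

lemma value_system_cong:
  assumes "\<forall>j\<in>S. v j = w j"
  shows "value_system S h e a v \<longleftrightarrow> value_system S h e a w"
proof -
  have "(\<Sum>k\<in>S. f k * v k) = (\<Sum>k\<in>S. f k * w k)" for f using assms by (intro sum.cong) auto
  then show ?thesis unfolding value_system_def using assms by auto
qed

lemma io_economy_row_sum_less_one: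
  assumes "io_economy S h e a" and "k \<in> S"
  shows "(\<Sum>j\<in>S. a k j) < 1"
proof -
  have "(\<Sum>j\<in>S. a k j) + a k 0 + e k = 1" "0 < a k 0" "0 \<le> e k"
    using assms unfolding io_economy_def by auto
  then show ?thesis by linarith
qed

text \<open>Taking absolute values gives \<open>|d| \<le> a\<^sup>T|d| + h (e \<cdot> |d|)\<close>; summed over all firms, the budget
  identity cancels everything except the labor leakage \<open>\<Sum>k. a k 0 |d k|\<close>, which must vanish.\<close>

lemma homogeneous_value_system_zero:
  assumes econ: "io_economy S h e a"
    and d_eq: "\<forall>j\<in>S. d j = h j * (\<Sum>k\<in>S. e k * d k) + (\<Sum>k\<in>S. a k j * d k)"
    and j: "j \<in> S"
  shows "d j = 0"
proof -
  from econ have fin: "finite S" and a: "\<forall>k\<in>S. \<forall>j\<in>S. 0 \<le> a k j" and labor: "\<forall>k\<in>S. 0 < a k 0"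
    and e: "\<forall>k\<in>S. 0 \<le> e k" and budget: "\<forall>k\<in>S. (\<Sum>j\<in>S. a k j) + a k 0 + e k = 1"
    and h: "\<forall>j\<in>S. 0 \<le> h j" and hsum: "(\<Sum>j\<in>S. h j) = 1"
    unfolding io_economy_def by auto
  define E where "E = (\<Sum>k\<in>S. e k * d k)"
  have d_le: "\<bar>d j\<bar> \<le> h j * \<bar>E\<bar> + (\<Sum>k\<in>S. a k j * \<bar>d k\<bar>)" if j: "j \<in> S" for j
  proof -
    have "d j = h j * E + (\<Sum>k\<in>S. a k j * d k)" using d_eq j unfolding E_def by blast
    then have "\<bar>d j\<bar> \<le> \<bar>h j * E\<bar> + (\<Sum>k\<in>S. \<bar>a k j * d k\<bar>)"
      by (simp only: order_trans[OF abs_triangle_ineq add_left_mono[OF sum_abs]])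
    also have "\<dots> = h j * \<bar>E\<bar> + (\<Sum>k\<in>S. a k j * \<bar>d k\<bar>)"
      using h a j by (simp add: abs_mult)
    finally show ?thesis .
  qed
  have E_le: "\<bar>E\<bar> \<le> (\<Sum>k\<in>S. e k * \<bar>d k\<bar>)"
  proof -
    have "\<bar>E\<bar> \<le> (\<Sum>k\<in>S. \<bar>e k * d k\<bar>)" unfolding E_def by (rule sum_abs)
    also have "\<dots> = (\<Sum>k\<in>S. e k * \<bar>d k\<bar>)" using e by (intro sum.cong) (auto simp: abs_mult)
    finally show ?thesis .
  qed
  have "(\<Sum>j\<in>S. \<bar>d j\<bar>) \<le> (\<Sum>j\<in>S. h j * \<bar>E\<bar> + (\<Sum>k\<in>S. a k j * \<bar>d k\<bar>))"
    using d_le by (intro sum_mono) auto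
  also have "\<dots> = \<bar>E\<bar> + (\<Sum>k\<in>S. (\<Sum>j\<in>S. a k j) * \<bar>d k\<bar>)"
  proof -
    have "(\<Sum>j\<in>S. h j * \<bar>E\<bar>) = \<bar>E\<bar>" using hsum by (simp add: sum_distrib_right[symmetric])
    moreover have "(\<Sum>j\<in>S. \<Sum>k\<in>S. a k j * \<bar>d k\<bar>) = (\<Sum>k\<in>S. (\<Sum>j\<in>S. a k j) * \<bar>d k\<bar>)"
      by (subst sum.swap) (simp add: sum_distrib_right)
    ultimately show ?thesis by (simp add: sum.distrib)
  qed
  also have "\<dots> \<le> (\<Sum>k\<in>S. (e k + (\<Sum>j\<in>S. a k j)) * \<bar>d k\<bar>)"
    using E_le by (simp only: distrib_right sum.distrib add_right_mono)
  also have "\<dots> = (\<Sum>k\<in>S. \<bar>d k\<bar> - a k 0 * \<bar>d k\<bar>)"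
  proof (intro sum.cong refl)
    fix k assume "k \<in> S"
    then have "e k + (\<Sum>j\<in>S. a k j) = 1 - a k 0" using budget by fastforce
    then show "(e k + (\<Sum>j\<in>S. a k j)) * \<bar>d k\<bar> = \<bar>d k\<bar> - a k 0 * \<bar>d k\<bar>"
      by (simp add: left_diff_distrib)
  qed
  finally have "(\<Sum>k\<in>S. a k 0 * \<bar>d k\<bar>) \<le> 0" by (simp add: sum_subtractf)
  moreover have nonneg: "\<forall>k\<in>S. 0 \<le> a k 0 * \<bar>d k\<bar>" using labor by (simp add: less_imp_le)
  ultimately have "(\<Sum>k\<in>S. a k 0 * \<bar>d k\<bar>) = 0" by (simp add: antisym sum_nonneg)
  then have "a j 0 * \<bar>d j\<bar> = 0"
    using sum_nonneg_eq_0_iff[OF fin, of "\<lambda>k. a k 0 * \<bar>d k\<bar>"] nonneg j by blast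
  moreover have "a j 0 \<noteq> 0" using labor j by force
  ultimately show ?thesis by simp
qed

lemma value_system_unique:
  assumes econ: "io_economy S h e a"
    and v: "value_system S h e a v" and w: "value_system S h e a w" and j: "j \<in> S"
  shows "v j = w j"
proof -
  have "v j - w j = h j * (\<Sum>k\<in>S. e k * (v k - w k)) + (\<Sum>k\<in>S. a k j * (v k - w k))"
    if j: "j \<in> S" for j
  proof -
    have "v j = h j + h j * (\<Sum>k\<in>S. e k * v k) + (\<Sum>k\<in>S. a k j * v k)"
      "w j = h j + h j * (\<Sum>k\<in>S. e k * w k) + (\<Sum>k\<in>S. a k j * w k)"
      using v w j unfolding value_system_def by blast+
    moreover have "h j * (\<Sum>k\<in>S. e k * (v k - w k)) = h j * (\<Sum>k\<in>S. e k * v k) - h j * (\<Sum>k\<in>S. e k * w k)"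
      "(\<Sum>k\<in>S. a k j * (v k - w k)) = (\<Sum>k\<in>S. a k j * v k) - (\<Sum>k\<in>S. a k j * w k)"
      by (simp_all add: right_diff_distrib sum_subtractf)
    ultimately show ?thesis by linarith
  qed
  then have "v j - w j = 0"
    using homogeneous_value_system_zero[OF econ, of "\<lambda>j. v j - w j"] j by blast
  then show ?thesis by simp
qed

lemma gross_output_exists:
  assumes "io_economy S h e a"
  obtains u where "gross_output S h a u"
proof -
  have "finite S" "\<forall>j\<in>S. 0 \<le> h j" "\<forall>j\<in>S. \<forall>k\<in>S. 0 \<le> a k j"
    using assms unfolding io_economy_def by auto
  moreover have "\<forall>k\<in>S. (\<Sum>j\<in>S. a k j) < 1"
    using io_economy_row_sum_less_one[OF assms] by blast
  ultimately obtain u where "\<forall>j\<in>S. u j = h j + (\<Sum>k\<in>S. a k j * u k)" "\<forall>j\<in>S. 0 \<le> u j"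
    using nonneg_fixpoint_if_col_sums_less_one[of S h "\<lambda>j k. a k j"] by blast
  then show ?thesis using that unfolding gross_output_def by blast
qed

lemma gross_output_budget:
  assumes econ: "io_economy S h e a" and u: "gross_output S h a u"
  shows "(\<Sum>k\<in>S. a k 0 * u k) + (\<Sum>k\<in>S. e k * u k) = 1"
proof -
  have budget: "\<forall>k\<in>S. (\<Sum>j\<in>S. a k j) = 1 - a k 0 - e k" and hsum: "(\<Sum>j\<in>S. h j) = 1"
    using econ unfolding io_economy_def by (auto simp: algebra_simps)
  have "(\<Sum>j\<in>S. u j) = (\<Sum>j\<in>S. h j + (\<Sum>k\<in>S. a k j * u k))"
    using u unfolding gross_output_def by (intro sum.cong) auto
  also have "\<dots> = 1 + (\<Sum>k\<in>S. (\<Sum>j\<in>S. a k j) * u k)"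
    by (simp add: sum.distrib hsum sum_distrib_right) (subst sum.swap, simp)
  also have "(\<Sum>k\<in>S. (\<Sum>j\<in>S. a k j) * u k) = (\<Sum>k\<in>S. u k - a k 0 * u k - e k * u k)"
  proof (intro sum.cong refl)
    fix k assume "k \<in> S"
    then have "(\<Sum>j\<in>S. a k j) * u k = (1 - a k 0 - e k) * u k" using budget by simp
    then show "(\<Sum>j\<in>S. a k j) * u k = u k - a k 0 * u k - e k * u k" by (simp add: algebra_simps)
  qed
  finally show ?thesis by (simp add: sum_subtractf)
qed

lemma labor_content_pos:
  assumes econ: "io_economy S h e a" and u: "gross_output S h a u"
  shows "0 < (\<Sum>k\<in>S. a k 0 * u k)"
proof -
  have fin: "finite S" and labor: "\<forall>k\<in>S. 0 < a k 0" and e: "\<forall>k\<in>S. 0 \<le> e k"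
    and u0: "\<forall>k\<in>S. 0 \<le> u k"
    using econ u unfolding io_economy_def gross_output_def by auto
  have "(\<Sum>k\<in>S. a k 0 * u k) \<noteq> 0"
  proof
    assume "(\<Sum>k\<in>S. a k 0 * u k) = 0"
    moreover have "\<forall>k\<in>S. 0 \<le> a k 0 * u k" using labor u0 by (simp add: less_imp_le)
    ultimately have "\<forall>k\<in>S. a k 0 * u k = 0"
      using sum_nonneg_eq_0_iff[OF fin, of "\<lambda>k. a k 0 * u k"] by blast
    then have "\<forall>k\<in>S. u k = 0" using labor by (metis less_irrefl mult_eq_0_iff)
    then show False using gross_output_budget[OF econ u] \<open>(\<Sum>k\<in>S. a k 0 * u k) = 0\<close> by simp
  qed
  moreover have "0 \<le> (\<Sum>k\<in>S. a k 0 * u k)"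
    using labor u0 by (intro sum_nonneg) (simp add: less_imp_le)
  ultimately show ?thesis by simp
qed

lemma value_system_gross_output:
  assumes econ: "io_economy S h e a" and u: "gross_output S h a u"
  shows "value_system S h e a (\<lambda>j. u j / (\<Sum>k\<in>S. a k 0 * u k))"
proof -
  define c where "c = (\<Sum>k\<in>S. a k 0 * u k)"
  have c: "0 < c" unfolding c_def by (rule labor_content_pos[OF econ u])
  have budget: "c + (\<Sum>k\<in>S. e k * u k) = 1"
    using gross_output_budget[OF econ u] unfolding c_def .
  have "u j / c = h j + h j * (\<Sum>k\<in>S. e k * (u k / c)) + (\<Sum>k\<in>S. a k j * (u k / c))"
    if j: "j \<in> S" for j
  proof -
    have uj: "u j = h j + (\<Sum>k\<in>S. a k j * u k)" using u j unfolding gross_output_def by blast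
    have "h j + h j * (\<Sum>k\<in>S. e k * (u k / c)) + (\<Sum>k\<in>S. a k j * (u k / c))
        = (h j * (c + (\<Sum>k\<in>S. e k * u k)) + (\<Sum>k\<in>S. a k j * u k)) / c"
      using c by (simp add: sum_divide_distrib[symmetric] field_simps)
    also have "\<dots> = u j / c" using budget uj by simp
    finally show ?thesis by simp
  qed
  moreover have "(\<Sum>k\<in>S. a k 0 * (u k / c)) = 1"
    using c by (simp add: sum_divide_distrib[symmetric] c_def[symmetric])
  ultimately show ?thesis unfolding value_system_def c_def by blast
qed

text \<open>Changing only the row of firm \<open>i\<close> from \<open>a i\<close> to \<open>a' i\<close> perturbs gross output by
  \<open>d = a\<^sup>T d + u' i (a' i - a i)\<close>, so any \<open>f \<cdot> d\<close> is read off the solution of \<open>p = f + a p\<close>.\<close>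

lemma gross_output_deviation:
  assumes fin: "finite S" and i: "i \<in> S"
    and same: "\<forall>k\<in>S. k \<noteq> i \<longrightarrow> a' k = a k"
    and u: "gross_output S h a u" and u': "gross_output S h a' u'"
    and p: "\<forall>j\<in>S. p j = f j + (\<Sum>k\<in>S. a j k * p k)"
  shows "(\<Sum>j\<in>S. f j * (u' j - u j)) = u' i * (\<Sum>j\<in>S. p j * (a' i j - a i j))"
proof -
  have "\<forall>j\<in>S. u' j - u j = (\<Sum>k\<in>S. a k j * (u' k - u k)) + (a' i j - a i j) * u' i"
  proof
    fix j assume j: "j \<in> S"
    have "(\<Sum>k\<in>S. a' k j * u' k) - (\<Sum>k\<in>S. a k j * u' k) = (\<Sum>k\<in>S. (a' k j - a k j) * u' k)"
      by (simp add: left_diff_distrib sum_subtractf)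
    also have "\<dots> = (\<Sum>k\<in>S. if k = i then (a' i j - a i j) * u' i else 0)"
      using same by (intro sum.cong) auto
    also have "\<dots> = (a' i j - a i j) * u' i" using fin i by simp
    moreover have "(\<Sum>k\<in>S. a k j * (u' k - u k)) = (\<Sum>k\<in>S. a k j * u' k) - (\<Sum>k\<in>S. a k j * u k)"
      by (simp add: right_diff_distrib sum_subtractf)
    moreover have "u j = h j + (\<Sum>k\<in>S. a k j * u k)" "u' j = h j + (\<Sum>k\<in>S. a' k j * u' k)"
      using u u' j unfolding gross_output_def by blast+
    ultimately show "u' j - u j = (\<Sum>k\<in>S. a k j * (u' k - u k)) + (a' i j - a i j) * u' i"
      by linarith
  qed
  then have "(\<Sum>j\<in>S. f j * (u' j - u j)) = (\<Sum>j\<in>S. p j * ((a' i j - a i j) * u' i))"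
    using p by (rule sum_adjoint_fixpoints)
  then show ?thesis by (simp add: sum_distrib_left ac_simps)
qed

text \<open>Here \<open>p\<close> is the column of the Leontief inverse at \<open>i\<close> (the downstream weight of \<open>i\<close>) and \<open>q\<close>
  the labor content of each firm; gross output at \<open>i\<close> does not grow while the numeraire stays put.\<close>

lemma value_system_deviation_le:
  assumes econ: "io_economy S h e a" and econ': "io_economy S h e a'"
    and i: "i \<in> S" and same: "\<forall>k\<in>S. k \<noteq> i \<longrightarrow> a' k = a k" and labor: "a' i 0 = a i 0"
    and p: "\<forall>j\<in>S. p j = (if j = i then 1 else 0) + (\<Sum>k\<in>S. a j k * p k)"
    and q: "\<forall>j\<in>S. q j = a j 0 + (\<Sum>k\<in>S. a j k * q k)"
    and downstream: "(\<Sum>j\<in>S. p j * (a' i j - a i j)) \<le> 0"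
    and labor_content: "(\<Sum>j\<in>S. q j * (a' i j - a i j)) = 0"
    and v: "value_system S h e a v" and v': "value_system S h e a' v'"
  shows "v' i \<le> v i"
proof -
  have fin: "finite S" using econ unfolding io_economy_def by blast
  obtain u where u: "gross_output S h a u" using gross_output_exists[OF econ] .
  obtain u' where u': "gross_output S h a' u'" using gross_output_exists[OF econ'] .
  have "(\<Sum>j\<in>S. (if j = i then 1 else 0) * (u' j - u j)) = u' i * (\<Sum>j\<in>S. p j * (a' i j - a i j))"
    by (rule gross_output_deviation[OF fin i same u u' p])
  moreover have "(\<Sum>j\<in>S. (if j = i then 1 else 0) * (u' j - u j)) = u' i - u i"
    using fin i by (simp add: if_distrib[of "\<lambda>x. x * _"] cong: if_cong)
  moreover have "0 \<le> u' i" using u' i unfolding gross_output_def by blast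
  ultimately have "u' i - u i \<le> 0" using downstream by (simp add: mult_nonneg_nonpos)
  have "(\<Sum>j\<in>S. a j 0 * (u' j - u j)) = u' i * (\<Sum>j\<in>S. q j * (a' i j - a i j))"
    by (rule gross_output_deviation[OF fin i same u u' q])
  then have "(\<Sum>k\<in>S. a k 0 * u' k) = (\<Sum>k\<in>S. a k 0 * u k)"
    using labor_content by (simp add: right_diff_distrib sum_subtractf)
  moreover have "(\<Sum>k\<in>S. a' k 0 * u' k) = (\<Sum>k\<in>S. a k 0 * u' k)"
    using same labor by (intro sum.cong) auto
  ultimately have same_numeraire: "(\<Sum>k\<in>S. a' k 0 * u' k) = (\<Sum>k\<in>S. a k 0 * u k)" by simp
  have "v i = u i / (\<Sum>k\<in>S. a k 0 * u k)"
    using value_system_unique[OF econ v value_system_gross_output[OF econ u] i] .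
  moreover have "v' i = u' i / (\<Sum>k\<in>S. a k 0 * u k)"
    using value_system_unique[OF econ' v' value_system_gross_output[OF econ' u'] i]
    unfolding same_numeraire .
  ultimately show ?thesis
    using \<open>u' i - u i \<le> 0\<close> labor_content_pos[OF econ u] by (simp add: divide_right_mono)
qed

section \<open>The replicate game\<close>

lemma finite_firms: "finite (firms n L)"
  by (simp add: firms_def)

lemma zero_notin_firms: "0 \<notin> firms n L"
  by (simp add: firms_def)

lemma firm_coordinates:
  assumes "1 \<le> n" and "j \<in> firms n L"
  shows "sector n j \<in> {1..L}" and "country n j \<in> {1..n}" and "j = (sector n j - 1) * n + country n j"
proof -
  from assms have j: "1 \<le> j" "j \<le> n * L" by (auto simp: firms_def)
  then have "(j - 1) div n < L"
    using assms(1) by (simp add: div_less_iff_less_mult mult.commute)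
  then show "sector n j \<in> {1..L}" by (simp add: sector_def)
  have "(j - 1) mod n < n" using assms(1) by simp
  then show "country n j \<in> {1..n}" by (simp add: country_def)
  show "j = (sector n j - 1) * n + country n j"
    using j by (simp add: sector_def country_def)
qed

lemma firm_index:
  assumes "1 \<le> n" and "l \<in> {1..L}" and "c \<in> {1..n}"
  shows "sector n ((l - 1) * n + c) = l" and "country n ((l - 1) * n + c) = c"
    and "(l - 1) * n + c \<in> firms n L"
proof -
  have idx: "(l - 1) * n + c - 1 = (l - 1) * n + (c - 1)" and "c - 1 < n" using assms by auto
  then have d: "((l - 1) * n + (c - 1)) div n = l - 1" and m: "((l - 1) * n + (c - 1)) mod n = c - 1"
    by simp_all
  show "sector n ((l - 1) * n + c) = l" "country n ((l - 1) * n + c) = c"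
    unfolding sector_def country_def idx d m using assms by simp_all
  have "(l - 1) * n + c \<le> l * n" using assms by (cases l) auto
  also have "\<dots> \<le> L * n" using assms by simp
  finally show "(l - 1) * n + c \<in> firms n L" using assms by (simp add: firms_def mult.commute)
qed

lemma sector_firms_eq:
  assumes "1 \<le> n" and "l \<in> {1..L}"
  shows "sector_firms n l = {j \<in> firms n L. sector n j = l}"
proof (intro equalityI subsetI)
  fix j assume "j \<in> sector_firms n l"
  then have j: "(l - 1) * n + 1 \<le> j" "j \<le> l * n" by (auto simp: sector_firms_def)
  define c where "c = j - (l - 1) * n"
  have "c \<in> {1..n}" using j assms unfolding c_def by (cases l) auto
  moreover have "j = (l - 1) * n + c" using j unfolding c_def by simp
  ultimately show "j \<in> {j \<in> firms n L. sector n j = l}" using firm_index[OF assms] by simp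
next
  fix j assume "j \<in> {j \<in> firms n L. sector n j = l}"
  then have "j = (l - 1) * n + country n j" "country n j \<in> {1..n}"
    using firm_coordinates[OF assms(1)] by auto
  moreover have "(l - 1) * n + n = l * n" using assms by (cases l) auto
  ultimately show "j \<in> sector_firms n l"
    unfolding sector_firms_def by (metis add_le_cancel_left atLeastAtMost_iff le_add1 add_mono le_refl)
qed

lemma card_sector_countries:
  assumes "1 \<le> n" and "l \<in> {1..L}" and "C \<subseteq> {1..n}"
  shows "card {j \<in> firms n L. sector n j = l \<and> country n j \<in> C} = card C"
proof -
  have "{j \<in> firms n L. sector n j = l \<and> country n j \<in> C} = (\<lambda>c. (l - 1) * n + c) ` C"
  proof (intro equalityI subsetI)
    fix j assume "j \<in> {j \<in> firms n L. sector n j = l \<and> country n j \<in> C}"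
    then show "j \<in> (\<lambda>c. (l - 1) * n + c) ` C" using firm_coordinates(3)[OF assms(1), of j L] by force
  next
    fix j assume "j \<in> (\<lambda>c. (l - 1) * n + c) ` C"
    then show "j \<in> {j \<in> firms n L. sector n j = l \<and> country n j \<in> C}"
      using firm_index[OF assms(1,2)] assms(3) by auto
  qed
  moreover have "inj_on (\<lambda>c. (l - 1) * n + c) C" by (auto simp: inj_on_def)
  ultimately show ?thesis by (simp add: card_image)
qed

lemma sum_by_sector:
  assumes "1 \<le> n" and y: "y \<in> strat_set n L b i"
  shows "(\<Sum>j\<in>firms n L. y j * \<phi> (sector n j)) = (\<Sum>l=1..L. b (sector n i) l * \<phi> l)"
proof -
  have "(\<Sum>j\<in>firms n L. y j * \<phi> (sector n j))
      = (\<Sum>l\<in>{1..L}. \<Sum>j\<in>{j \<in> firms n L. sector n j = l}. y j * \<phi> (sector n j))"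
    using firm_coordinates(1)[OF assms(1)] by (intro sum.group[symmetric]) (auto simp: finite_firms)
  also have "\<dots> = (\<Sum>l\<in>{1..L}. (\<Sum>j\<in>sector_firms n l. y j) * \<phi> l)"
    using sector_firms_eq[OF assms(1)] by (intro sum.cong) (auto simp: sum_distrib_right)
  also have "\<dots> = (\<Sum>l\<in>{1..L}. b (sector n i) l * \<phi> l)"
    using y unfolding strat_set_def by (intro sum.cong) auto
  finally show ?thesis by simp
qed

lemma strat_set_sum:
  assumes "1 \<le> n" and "y \<in> strat_set n L b i"
  shows "(\<Sum>j\<in>firms n L. y j) = (\<Sum>l=1..L. b (sector n i) l)"
  using sum_by_sector[OF assms, of "\<lambda>_. 1"] by simp

lemma cluster_of_eq:
  assumes "partition_on A Q" and "S \<in> Q" and "c \<in> S"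
  shows "cluster_of Q c = S"
  unfolding cluster_of_def
proof (rule the_equality)
  show "S' = S" if "S' \<in> Q \<and> c \<in> S'" for S'
    using assms that unfolding partition_on_def disjoint_def by blast
qed (use assms in simp)

lemma cluster_of_mem:
  assumes "partition_on A Q" and "c \<in> A"
  shows "cluster_of Q c \<in> Q" and "c \<in> cluster_of Q c" and "cluster_of Q c \<subseteq> A"
proof -
  obtain S where "S \<in> Q" "c \<in> S" using assms unfolding partition_on_def by blast
  with cluster_of_eq[OF assms(1)] assms(1)
  show "cluster_of Q c \<in> Q" "c \<in> cluster_of Q c" "cluster_of Q c \<subseteq> A"
    unfolding partition_on_def by auto
qed

lemma card_cluster_of_pos:
  assumes "partition_on {1..n} Q" and "c \<in> {1..n}"
  shows "0 < card (cluster_of Q c)"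
proof -
  have "finite (cluster_of Q c)" using cluster_of_mem(3)[OF assms] finite_subset by blast
  then show ?thesis using cluster_of_mem(2)[OF assms] card_gt_0_iff by blast
qed

definition admissible_requirements :: "nat \<Rightarrow> (nat \<Rightarrow> nat \<Rightarrow> real) \<Rightarrow> bool" where
  "admissible_requirements L b \<longleftrightarrow> (\<forall>l\<in>{1..L}. \<forall>l'\<in>{0..L}. 0 \<le> b l l')
     \<and> (\<forall>l\<in>{1..L}. 0 < b l 0) \<and> (\<forall>l\<in>{1..L}. (\<Sum>l'=0..L. b l l') < 1)"

lemma admissible_requirements_row_sum_less_one:
  assumes "admissible_requirements L b" and "l \<in> {1..L}"
  shows "(\<Sum>l'=1..L. b l l') < 1"
proof -
  have "(\<Sum>l'=0..L. b l l') = b l 0 + (\<Sum>l'=1..L. b l l')" by (simp add: sum.atLeast_Suc_atMost)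
  then show ?thesis using assms unfolding admissible_requirements_def by fastforce
qed

lemma admissible_requirements_own_less_one:
  assumes b: "admissible_requirements L b" and l: "l \<in> {1..L}"
  shows "b l l < 1"
proof -
  have "b l l \<le> (\<Sum>l'=1..L. b l l')"
    using b l unfolding admissible_requirements_def by (intro member_le_sum) auto
  then show ?thesis using admissible_requirements_row_sum_less_one[OF b l] by linarith
qed

lemma clustered_entry:
  assumes "i \<in> firms n L" and "j \<in> firms n L"
  shows "clustered n L b Q i j = (if j = i then b (sector n i) (sector n i)
     else if sector n j \<noteq> sector n i \<and> country n j \<in> cluster_of Q (country n i)
     then b (sector n i) (sector n j) / real (card (cluster_of Q (country n i))) else 0)"
proof -
  have "j \<noteq> 0" using assms(2) zero_notin_firms by metis
  then show ?thesis using assms unfolding clustered_def by simp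
qed

lemma sum_sector_firms_clustered:
  assumes n: "1 \<le> n" and Q: "partition_on {1..n} Q" and i: "i \<in> firms n L" and l: "l \<in> {1..L}"
  shows "(\<Sum>j\<in>sector_firms n l. clustered n L b Q i j) = b (sector n i) l"
proof (cases "l = sector n i")
  case True
  have "(\<Sum>j\<in>sector_firms n l. clustered n L b Q i j)
      = (\<Sum>j\<in>{j \<in> firms n L. sector n j = l}. if j = i then b l l else 0)"
    unfolding sector_firms_eq[OF n l] using clustered_entry[OF i, of _ b Q] True
    by (intro sum.cong) auto
  also have "\<dots> = b l l" using i True by (simp add: finite_firms)
  finally show ?thesis using True by simp
next
  case False
  define C where "C = cluster_of Q (country n i)"
  have C: "C \<subseteq> {1..n}" "0 < card C"
    using cluster_of_mem(3)[OF Q] card_cluster_of_pos[OF Q] firm_coordinates(2)[OF n i]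
    unfolding C_def by auto
  have "(\<Sum>j\<in>sector_firms n l. clustered n L b Q i j)
      = (\<Sum>j\<in>{j \<in> firms n L. sector n j = l}. if country n j \<in> C then b (sector n i) l / card C else 0)"
    unfolding sector_firms_eq[OF n l] using clustered_entry[OF i, of _ b Q] False
    unfolding C_def by (intro sum.cong) auto
  also have "\<dots> = (\<Sum>j\<in>{j \<in> firms n L. sector n j = l \<and> country n j \<in> C}. b (sector n i) l / card C)"
    by (subst sum.inter_filter[symmetric]) (auto simp: finite_firms intro: sum.cong)
  also have "\<dots> = b (sector n i) l"
    using card_sector_countries[OF n l C(1)] C(2) by simp
  finally show ?thesis .
qed

lemma clustered_in_strat_set:
  assumes n: "1 \<le> n" and Q: "partition_on {1..n} Q" and i: "i \<in> firms n L"
    and b: "\<forall>l\<in>{1..L}. \<forall>l'\<in>{0..L}. 0 \<le> b l l'"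
  shows "clustered n L b Q i \<in> strat_set n L b i"
proof -
  let ?a = "clustered n L b Q i"
  have si: "sector n i \<in> {1..L}" using firm_coordinates(1)[OF n i] .
  have "0 \<le> ?a j" for j
  proof (cases "j \<in> firms n L")
    case True
    then show ?thesis
      using clustered_entry[OF i True, of b Q] b si firm_coordinates(1)[OF n True] by auto
  qed (use i b si in \<open>auto simp: clustered_def\<close>)
  moreover have "?a j = 0" if "j \<notin> insert 0 (firms n L)" for j
    using that i unfolding clustered_def by auto
  moreover have "?a 0 = b (sector n i) 0" using i unfolding clustered_def by simp
  ultimately show ?thesis
    using sum_sector_firms_clustered[OF n Q i] unfolding strat_set_def by blast
qed

lemma sum_hh_share:
  assumes n: "1 \<le> n" and a0: "(\<Sum>l=1..L. a0 l) = 1"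
  shows "(\<Sum>j\<in>firms n L. hh_share n a0 j) = 1"
proof -
  have "(\<Sum>j\<in>firms n L. hh_share n a0 j)
      = (\<Sum>l\<in>{1..L}. \<Sum>j\<in>{j \<in> firms n L. sector n j = l}. hh_share n a0 j)"
    using firm_coordinates(1)[OF n] by (intro sum.group[symmetric]) (auto simp: finite_firms)
  also have "\<dots> = (\<Sum>l\<in>{1..L}. a0 l)"
  proof (intro sum.cong refl)
    fix l assume l: "l \<in> {1..L}"
    have "{j \<in> firms n L. sector n j = l} = {j \<in> firms n L. sector n j = l \<and> country n j \<in> {1..n}}"
      using firm_coordinates(2)[OF n] by blast
    then have "card {j \<in> firms n L. sector n j = l} = n"
      using card_sector_countries[OF n l, of "{1..n}"] by simp
    then show "(\<Sum>j\<in>{j \<in> firms n L. sector n j = l}. hh_share n a0 j) = a0 l"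
      using n unfolding hh_share_def by simp
  qed
  finally show ?thesis using a0 by simp
qed

lemma io_economy_strategy_profile:
  assumes n: "1 \<le> n" and a0_pos: "\<forall>l\<in>{1..L}. 0 < a0 l" and a0_sum: "(\<Sum>l=1..L. a0 l) = 1"
    and b: "admissible_requirements L b"
    and a: "\<forall>k\<in>firms n L. a k \<in> strat_set n L b k"
  shows "io_economy (firms n L) (hh_share n a0) (firm_eps n L b) a"
proof -
  have sec: "sector n k \<in> {1..L}" if "k \<in> firms n L" for k using firm_coordinates(1)[OF n that] .
  have labor: "a k 0 = b (sector n k) 0" if "k \<in> firms n L" for k
    using a that unfolding strat_set_def by blast
  have "(\<Sum>j\<in>firms n L. a k j) + a k 0 + firm_eps n L b k = 1" if k: "k \<in> firms n L" for k
  proof -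
    have "(\<Sum>l'=0..L. b (sector n k) l') = b (sector n k) 0 + (\<Sum>l'=1..L. b (sector n k) l')"
      by (simp add: sum.atLeast_Suc_atMost)
    then show ?thesis
      using strat_set_sum[OF n] a k labor[OF k] unfolding firm_eps_def by simp
  qed
  moreover have "\<forall>k\<in>firms n L. \<forall>j\<in>firms n L. 0 \<le> a k j" using a unfolding strat_set_def by blast
  ultimately show ?thesis
    using b sec labor a0_pos sum_hh_share[OF n a0_sum] finite_firms
    unfolding io_economy_def admissible_requirements_def firm_eps_def hh_share_def
    by (auto simp: less_imp_le)
qed

lemma value_eqs_iff_value_system:
  "value_eqs n L a0 b a v \<longleftrightarrow> value_system (firms n L) (hh_share n a0) (firm_eps n L b) a v"
  unfolding value_eqs_def value_system_def by simp

lemma vbar_value_system: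
  assumes econ: "io_economy (firms n L) (hh_share n a0) (firm_eps n L b) a"
  shows "value_system (firms n L) (hh_share n a0) (firm_eps n L b) a (vbar n L a0 b a)"
proof -
  let ?M = "firms n L"
  obtain u where u: "gross_output ?M (hh_share n a0) a u" using gross_output_exists[OF econ] .
  define v where "v j = (if j \<in> ?M then u j / (\<Sum>k\<in>?M. a k 0 * u k) else 0)" for j
  have v: "value_system ?M (hh_share n a0) (firm_eps n L b) a v"
    using value_system_gross_output[OF econ u]
      value_system_cong[of ?M v "\<lambda>j. u j / (\<Sum>k\<in>?M. a k 0 * u k)"]
    unfolding v_def by simp
  have "vbar n L a0 b a = v"
    unfolding vbar_def
  proof (rule the_equality)
    fix w assume w: "value_eqs n L a0 b a w \<and> (\<forall>j. j \<notin> ?M \<longrightarrow> w j = 0)"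
    then have "\<forall>j\<in>?M. w j = v j"
      using value_system_unique[OF econ _ v] unfolding value_eqs_iff_value_system by blast
    with w show "w = v" unfolding v_def by auto
  qed (use v in \<open>simp add: value_eqs_iff_value_system v_def\<close>)
  with v show ?thesis by simp
qed

lemma sector_labor_content_exists:
  assumes b: "admissible_requirements L b"
  obtains q where "\<forall>l\<in>{1..L}. q l = b l 0 + (\<Sum>l'=1..L. b l l' * q l')"
proof -
  have "\<forall>l\<in>{1..L}. 0 \<le> b l 0" "\<forall>l\<in>{1..L}. \<forall>l'\<in>{1..L}. 0 \<le> b l l'"
    using b unfolding admissible_requirements_def by auto
  moreover have "\<forall>l\<in>{1..L}. (\<Sum>l'=1..L. b l l') < 1"
    using admissible_requirements_row_sum_less_one[OF b] by blast
  ultimately show ?thesis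
    using nonneg_fixpoint_if_row_sums_less_one[of "{1..L}" "\<lambda>l. b l 0" b] that by auto
qed

lemma sector_labor_content_strat_set:
  assumes n: "1 \<le> n" and j: "j \<in> firms n L" and y: "y \<in> strat_set n L b j"
    and q: "\<forall>l\<in>{1..L}. q l = b l 0 + (\<Sum>l'=1..L. b l l' * q l')"
  shows "q (sector n j) = y 0 + (\<Sum>k\<in>firms n L. y k * q (sector n k))"
  using q firm_coordinates(1)[OF n j] y sum_by_sector[OF n y, of q]
  unfolding strat_set_def by simp

lemma sum_sector_weights_strat_set_diff:
  assumes n: "1 \<le> n" and x: "x \<in> strat_set n L b i" and y: "y \<in> strat_set n L b i"
  shows "(\<Sum>k\<in>firms n L. q (sector n k) * (x k - y k)) = 0"
  using sum_by_sector[OF n x, of q] sum_by_sector[OF n y, of q]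
  by (simp add: algebra_simps sum_subtractf)

lemma sum_weights_strat_set_le:
  assumes n: "1 \<le> n" and x: "x \<in> strat_set n L b i" and y: "y \<in> strat_set n L b i"
    and le: "\<forall>j\<in>firms n L. p j \<le> m (sector n j)"
    and eq: "\<forall>j\<in>firms n L. y j \<noteq> 0 \<longrightarrow> p j = m (sector n j)"
  shows "(\<Sum>j\<in>firms n L. p j * x j) \<le> (\<Sum>j\<in>firms n L. p j * y j)"
proof -
  have "(\<Sum>j\<in>firms n L. p j * x j) \<le> (\<Sum>j\<in>firms n L. x j * m (sector n j))"
  proof (intro sum_mono)
    fix j assume "j \<in> firms n L"
    moreover have "0 \<le> x j" using x unfolding strat_set_def by blast
    ultimately show "p j * x j \<le> x j * m (sector n j)"
      using le mult_right_mono[of "p j" "m (sector n j)" "x j"] by (simp add: mult.commute)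
  qed
  also have "\<dots> = (\<Sum>j\<in>firms n L. y j * m (sector n j))"
    using sum_by_sector[OF n x] sum_by_sector[OF n y] by simp
  also have "\<dots> = (\<Sum>j\<in>firms n L. p j * y j)"
    using eq by (intro sum.cong) auto
  finally show ?thesis .
qed

lemma clustered_row_sum_less_one:
  assumes n: "1 \<le> n" and Q: "partition_on {1..n} Q" and j: "j \<in> firms n L"
    and b: "admissible_requirements L b"
  shows "(\<Sum>k\<in>firms n L. clustered n L b Q j k) < 1"
  using strat_set_sum[OF n clustered_in_strat_set[OF n Q j]]
    admissible_requirements_row_sum_less_one[OF b firm_coordinates(1)[OF n j]] b
  unfolding admissible_requirements_def by simp

text \<open>Firms outside the cluster of \<open>i\<close> only trade among themselves, so none of their revenue
  reaches \<open>i\<close>.\<close>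

lemma downstream_outside_cluster:
  assumes n: "1 \<le> n" and Q: "partition_on {1..n} Q" and i: "i \<in> firms n L"
    and b: "admissible_requirements L b"
    and p: "\<forall>j\<in>firms n L. 0 \<le> p j"
    and p_eq: "\<forall>j\<in>firms n L. p j = (if j = i then 1 else 0) + (\<Sum>k\<in>firms n L. clustered n L b Q j k * p k)"
    and j: "j \<in> firms n L" and out: "country n j \<notin> cluster_of Q (country n i)"
  shows "p j = 0"
proof -
  let ?S = "firms n L" and ?a = "clustered n L b Q"
  define C where "C = cluster_of Q (country n i)"
  define T where "T = {j \<in> ?S. country n j \<notin> C}"
  have C: "C \<in> Q" "country n i \<in> C"
    using cluster_of_mem[OF Q firm_coordinates(2)[OF n i]] unfolding C_def by auto
  have b_nonneg: "\<forall>l\<in>{1..L}. \<forall>l'\<in>{0..L}. 0 \<le> b l l'"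
    using b unfolding admissible_requirements_def by blast
  have "?a j k = 0" if j: "j \<in> T" and k: "k \<in> ?S - T" for j k
  proof -
    define D where "D = cluster_of Q (country n j)"
    have D: "D \<in> Q" "country n j \<in> D"
      using cluster_of_mem[OF Q firm_coordinates(2)[OF n]] j unfolding D_def T_def by auto
    have "country n k \<in> C" "country n j \<notin> C" using j k unfolding T_def by auto
    then have "country n k \<notin> D" "k \<noteq> j"
      using Q C D unfolding partition_on_def disjoint_def by blast+
    then show ?thesis using clustered_entry[of j n L k b Q] j k unfolding T_def D_def by auto
  qed
  moreover have "\<forall>j\<in>T. \<forall>k\<in>?S. 0 \<le> ?a j k"
    using clustered_in_strat_set[OF n Q _ b_nonneg] unfolding T_def strat_set_def by blast
  moreover have "\<forall>j\<in>T. p j = (\<Sum>k\<in>?S. ?a j k * p k)"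
    using p_eq C(2) unfolding T_def by force
  moreover have "\<forall>j\<in>T. (\<Sum>k\<in>?S. ?a j k) < 1"
    using clustered_row_sum_less_one[OF n Q _ b] unfolding T_def by blast
  ultimately show ?thesis
    using nonneg_fixpoint_vanishes_on_closed_set[of T ?S ?a p j] finite_firms p j out
    unfolding T_def C_def by auto
qed

lemma sum_clustered_row_in_cluster:
  assumes Q: "partition_on {1..n} Q" and C: "C \<in> Q" and j: "j \<in> firms n L" "country n j \<in> C"
  shows "(\<Sum>k\<in>firms n L. clustered n L b Q j k * p k) = b (sector n j) (sector n j) * p j
    + (\<Sum>k\<in>firms n L. if sector n k \<noteq> sector n j \<and> country n k \<in> C
        then b (sector n j) (sector n k) / card C * p k else 0)"
proof -
  have "cluster_of Q (country n j) = C" using cluster_of_eq[OF Q C j(2)] .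
  then have "(\<Sum>k\<in>firms n L. clustered n L b Q j k * p k)
      = (\<Sum>k\<in>firms n L. (if k = j then b (sector n j) (sector n j) * p j else 0)
        + (if sector n k \<noteq> sector n j \<and> country n k \<in> C
           then b (sector n j) (sector n k) / card C * p k else 0))"
    using clustered_entry[OF j(1)] by (intro sum.cong) auto
  then show ?thesis using j(1) by (simp add: sum.distrib finite_firms)
qed

text \<open>Inside the cluster of \<open>i\<close> the clustered rows are symmetric across countries, so the
  downstream weight of a firm other than \<open>i\<close> depends only on its sector, and \<open>i\<close> itself
  weighs at least as much as its sector peers; \<open>i\<close> buys only from firms of maximal weight.\<close>

lemma downstream_cluster_profile:
  assumes n: "1 \<le> n" and Q: "partition_on {1..n} Q" and i: "i \<in> firms n L"
    and b: "admissible_requirements L b"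
    and p: "\<forall>j\<in>firms n L. 0 \<le> p j"
    and p_eq: "\<forall>j\<in>firms n L. p j = (if j = i then 1 else 0) + (\<Sum>k\<in>firms n L. clustered n L b Q j k * p k)"
  obtains m where "\<forall>j\<in>firms n L. p j \<le> m (sector n j)"
    and "\<forall>j\<in>firms n L. clustered n L b Q i j \<noteq> 0 \<longrightarrow> p j = m (sector n j)"
proof -
  let ?S = "firms n L" and ?a = "clustered n L b Q"
  define C where "C = cluster_of Q (country n i)"
  have C: "C \<in> Q" "country n i \<in> C"
    using cluster_of_mem[OF Q firm_coordinates(2)[OF n i]] unfolding C_def by auto
  have sector: "sector n j \<in> {1..L}" if "j \<in> ?S" for j using firm_coordinates(1)[OF n that] .
  have b_nonneg: "0 \<le> b l l'" if "l \<in> {1..L}" "l' \<in> {1..L}" for l l'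
    using b that unfolding admissible_requirements_def by auto
  note own_lt = admissible_requirements_own_less_one[OF b]
  define R where "R l = (\<Sum>k\<in>?S. if sector n k \<noteq> l \<and> country n k \<in> C
    then b l (sector n k) / card C * p k else 0)" for l
  have R_nonneg: "0 \<le> R l" if "l \<in> {1..L}" for l
    unfolding R_def using that b_nonneg sector p by (intro sum_nonneg) auto
  have p_in: "p j = (if j = i then 1 else 0) + b (sector n j) (sector n j) * p j + R (sector n j)"
    if j: "j \<in> ?S" "country n j \<in> C" for j
  proof -
    have "(\<Sum>k\<in>?S. ?a j k * p k) = b (sector n j) (sector n j) * p j + R (sector n j)"
      unfolding R_def by (rule sum_clustered_row_in_cluster[OF Q C(1) j])
    then show ?thesis using p_eq j(1) by simp
  qed
  define m where "m l = (if l = sector n i then p i else R l / (1 - b l l))" for l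
  have p_in_other: "p j = m (sector n j)"
    if j: "j \<in> ?S" "country n j \<in> C" "j \<noteq> i" "sector n j \<noteq> sector n i" for j
    using p_in[OF j(1,2)] own_lt[OF sector[OF j(1)]] j(3,4) unfolding m_def by (simp add: field_simps)
  have "p j \<le> m (sector n j)" if j: "j \<in> ?S" for j
  proof (cases "country n j \<in> C")
    case False
    then have "p j = 0" using downstream_outside_cluster[OF n Q i b p p_eq j] unfolding C_def by blast
    moreover have "0 \<le> m (sector n j)"
      unfolding m_def using p i R_nonneg[OF sector[OF j]] own_lt[OF sector[OF j]] by simp
    ultimately show ?thesis by simp
  next
    case True
    consider "j = i" | "j \<noteq> i" "sector n j \<noteq> sector n i" | "j \<noteq> i" "sector n j = sector n i" by blast
    then show ?thesis
    proof cases
      case 3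
      have "p j = R (sector n i) / (1 - b (sector n i) (sector n i))"
        using p_in[OF j True] own_lt[OF sector[OF j]] 3 by (simp add: field_simps)
      also have "\<dots> \<le> (1 + R (sector n i)) / (1 - b (sector n i) (sector n i))"
        using own_lt[OF sector[OF i]] by (intro divide_right_mono) auto
      also have "\<dots> = m (sector n j)"
        using p_in[OF i C(2)] own_lt[OF sector[OF i]] 3 unfolding m_def by (simp add: field_simps)
      finally show ?thesis .
    qed (use p_in_other[OF j True] in \<open>simp_all add: m_def\<close>)
  qed
  moreover have "p j = m (sector n j)" if j: "j \<in> ?S" and buys: "?a i j \<noteq> 0" for j
  proof (cases "j = i")
    case False
    then have "sector n j \<noteq> sector n i" "country n j \<in> C"
      using buys clustered_entry[OF i j] unfolding C_def by (auto split: if_splits)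
    then show ?thesis using p_in_other[OF j _ False] by blast
  qed (simp add: m_def)
  ultimately show ?thesis using that by blast
qed

lemma clustered_best_response:
  assumes n: "1 \<le> n" and a0_pos: "\<forall>l\<in>{1..L}. 0 < a0 l" and a0_sum: "(\<Sum>l=1..L. a0 l) = 1"
    and b: "admissible_requirements L b" and Q: "partition_on {1..n} Q"
    and i: "i \<in> firms n L" and x: "x \<in> strat_set n L b i"
  shows "payoff n L a0 b i ((clustered n L b Q)(i := x)) \<le> payoff n L a0 b i (clustered n L b Q)"
proof -
  let ?S = "firms n L" and ?a = "clustered n L b Q"
  let ?a' = "?a(i := x)"
  have b_nonneg: "\<forall>l\<in>{1..L}. \<forall>l'\<in>{0..L}. 0 \<le> b l l'"
    using b unfolding admissible_requirements_def by blast
  have strat: "\<forall>k\<in>?S. ?a k \<in> strat_set n L b k"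
    using clustered_in_strat_set[OF n Q _ b_nonneg] by blast
  moreover have "\<forall>k\<in>?S. ?a' k \<in> strat_set n L b k" using strat x by simp
  ultimately have econ: "io_economy ?S (hh_share n a0) (firm_eps n L b) ?a"
    and econ': "io_economy ?S (hh_share n a0) (firm_eps n L b) ?a'"
    using io_economy_strategy_profile[OF n a0_pos a0_sum b] by blast+
  have "\<exists>p. (\<forall>j\<in>?S. p j = (if j = i then 1 else 0) + (\<Sum>k\<in>?S. ?a j k * p k)) \<and> (\<forall>j\<in>?S. 0 \<le> p j)"
    by (rule nonneg_fixpoint_if_row_sums_less_one[OF finite_firms])
      (use strat clustered_row_sum_less_one[OF n Q _ b] in \<open>auto simp: strat_set_def\<close>)
  then obtain p where p_eq: "\<forall>j\<in>?S. p j = (if j = i then 1 else 0) + (\<Sum>k\<in>?S. ?a j k * p k)"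
    and p: "\<forall>j\<in>?S. 0 \<le> p j"
    by blast
  obtain m where "\<forall>j\<in>?S. p j \<le> m (sector n j)" "\<forall>j\<in>?S. ?a i j \<noteq> 0 \<longrightarrow> p j = m (sector n j)"
    using downstream_cluster_profile[OF n Q i b p p_eq] .
  then have downstream: "(\<Sum>j\<in>?S. p j * (x j - ?a i j)) \<le> 0"
    using sum_weights_strat_set_le[OF n x strat[rule_format, OF i]]
    by (simp add: right_diff_distrib sum_subtractf)
  obtain q where "\<forall>l\<in>{1..L}. q l = b l 0 + (\<Sum>l'=1..L. b l l' * q l')"
    using sector_labor_content_exists[OF b] .
  then have q_eq: "\<forall>j\<in>?S. q (sector n j) = ?a j 0 + (\<Sum>k\<in>?S. ?a j k * q (sector n k))"
    using sector_labor_content_strat_set[OF n] strat by blast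
  have "vbar n L a0 b ?a' i \<le> vbar n L a0 b ?a i"
    using value_system_deviation_le[OF econ econ' i _ _ p_eq q_eq _ _
        vbar_value_system[OF econ] vbar_value_system[OF econ']]
      downstream sum_sector_weights_strat_set_diff[OF n x strat[rule_format, OF i]] x strat i
    unfolding strat_set_def by auto
  moreover have "0 \<le> firm_eps n L b i" using econ i unfolding io_economy_def by blast
  ultimately show ?thesis unfolding payoff_def by (simp add: mult_left_mono)
qed

lemma clustered_nash_eq:
  assumes n: "1 \<le> n" and a0_pos: "\<forall>l\<in>{1..L}. 0 < a0 l" and a0_sum: "(\<Sum>l=1..L. a0 l) = 1"
    and b: "admissible_requirements L b" and Q: "partition_on {1..n} Q"
  shows "nash_eq n L a0 b (clustered n L b Q)"
  using clustered_in_strat_set[OF n Q] clustered_best_response[OF n a0_pos a0_sum b Q] b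
  unfolding nash_eq_def admissible_requirements_def by blast

lemma admissible_requirements_scaled:
  assumes eps: "\<forall>l\<in>{1..L}. 0 < eps l \<and> eps l < 1"
    and nonneg: "\<forall>l\<in>{1..L}. \<forall>l'\<in>{0..L}. 0 \<le> bhat l l'"
    and labor: "\<forall>l\<in>{1..L}. 0 < bhat l 0" and total: "\<forall>l\<in>{1..L}. (\<Sum>l'=0..L. bhat l l') = 1"
  shows "admissible_requirements L (\<lambda>l l'. (1 - eps l) * bhat l l')"
  unfolding admissible_requirements_def
proof (intro conjI ballI)
  fix l l' assume "l \<in> {1..L}" "l' \<in> {0..L}"
  then have "eps l < 1" "0 \<le> bhat l l'" using eps nonneg by auto
  then show "0 \<le> (1 - eps l) * bhat l l'" by simp
qed (use eps labor total in \<open>simp_all add: sum_distrib_left[symmetric]\<close>)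

theorem mainTheorem10:
  fixes n L :: nat and a0 :: "nat \<Rightarrow> real" and bhat :: "nat \<Rightarrow> nat \<Rightarrow> real"
  assumes "n \<ge> 1" and "L \<ge> 1"
    and "\<forall>l\<in>{1..L}. a0 l > 0"
    and "(\<Sum>l=1..L. a0 l) = 1"
    and "\<forall>l\<in>{1..L}. \<forall>l'\<in>{0..L}. bhat l l' \<ge> 0"
    and "\<forall>l\<in>{1..L}. bhat l 0 > 0"
    and "\<forall>l\<in>{1..L}. (\<Sum>l'=0..L. bhat l l') = 1"
  shows "\<exists>ebar>0. \<forall>eps :: nat \<Rightarrow> real.
           (\<forall>l\<in>{1..L}. 0 < eps l \<and> eps l < ebar) \<longrightarrow>
           (\<forall>Q. partition_on {1..n} Q \<longrightarrow>
              nash_eq n L a0 (\<lambda>l l'. (1 - eps l) * bhat l l')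
                (clustered n L (\<lambda>l l'. (1 - eps l) * bhat l l') Q))"
proof (intro exI[of _ 1] conjI allI impI)
  fix eps :: "nat \<Rightarrow> real" and Q
  assume "\<forall>l\<in>{1..L}. 0 < eps l \<and> eps l < 1" and "partition_on {1..n} Q"
  then show "nash_eq n L a0 (\<lambda>l l'. (1 - eps l) * bhat l l') (clustered n L (\<lambda>l l'. (1 - eps l) * bhat l l') Q)"
    using clustered_nash_eq admissible_requirements_scaled assms by blast
qed simp

end
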